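(* Let $N\ge1$, let $\phi:H_0(S_N)\to M_N$ be the quotient morphism sending $\pi_i\mapsto\pi_i$, where $M_N$ is the quotient of $H_0(S_N)$ by the relations $\pi_i\pi_{i+1}\pi_i=\pi_i\pi_{i+1}$ ($1\le i\le N-2$), and let $\Psi$ be the automorphism of $H_0(S_N)$ with $\Psi(\pi_i)=\pi_{N-i}$. For every $m\in M_N$ let $G_m=\{w\in S_N: \phi(\Psi(\pi_w))=m\}$. Every nonempty $G_m$ contains a unique $[321]$-avoiding permutation, which is of minimal length in $G_m$, and a unique $[312]$-avoiding permutation, which is of maximal length in $G_m$.
   Context: $S_N$ is generated by simple transpositions $s_1,\dots,s_{N-1}$; permutations are in one-line notation and composed as functions, $(uv)(j)=u(v(j))$, so $xs_i$ swaps the entries in positions $i,i+1$. $\operatorname{len}$ is Coxeter length (number of inversions). $H_0(S_N)$ is generated by $\pi_1,\dots,\pi_{N-1}$ with relations $\pi_i^2=\pi_i$, $\pi_i\pi_j=\pi_j\pi_i$ for $|i-j|\ge2$, $\pi_i\pi_{i+1}\pi_i=\pi_{i+1}\pi_i\pi_{i+1}$; $\pi_w:=\pi_{i_1}\cdots\pi_{i_k}$ for any reduced word $w=s_{i_1}\cdots s_{i_k}$, giving a bijection $S_N\to H_0(S_N)$. A permutation contains a pattern $\sigma\in S_k$ if some subsequence of its one-line notation is in the same relative order as $\sigma$; otherwise it avoids $\sigma$. *)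

theory Defs
  imports "HOL-Combinatorics.Permutations"
begin

text \<open>Permutations of S_N are functions w with w permutes {1..N}; one-line notation is
  w 1, ..., w N. Words in the generators are lists of indices i (standing for s_i / pi_i).\<close>

definition s_gen :: "nat \<Rightarrow> nat \<Rightarrow> nat" where
  "s_gen i = Transposition.transpose i (Suc i)"

definition word_prod :: "nat list \<Rightarrow> nat \<Rightarrow> nat" where
  "word_prod ws = foldr (\<lambda>i p. s_gen i \<circ> p) ws id"

definition len :: "nat \<Rightarrow> (nat \<Rightarrow> nat) \<Rightarrow> nat" where
  "len N w = card {(i, j). 1 \<le> i \<and> i < j \<and> j \<le> N \<and> w i > w j}"

definition reduced_word :: "nat \<Rightarrow> (nat \<Rightarrow> nat) \<Rightarrow> nat list \<Rightarrow> bool" where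
  "reduced_word N w ws \<longleftrightarrow> set ws \<subseteq> {1..N-1} \<and> word_prod ws = w \<and> length ws = len N w"

text \<open>The congruence on words (free monoid on pi_1..pi_{N-1}) generated by the
  0-Hecke relations together with the extra relations pi_i pi_{i+1} pi_i = pi_i pi_{i+1};
  the quotient of the free monoid by it is M_N.\<close>
inductive mcong :: "nat \<Rightarrow> nat list \<Rightarrow> nat list \<Rightarrow> bool" for N where
  idem: "1 \<le> i \<Longrightarrow> i \<le> N - 1 \<Longrightarrow> mcong N [i, i] [i]"
| comm: "1 \<le> i \<Longrightarrow> i \<le> N - 1 \<Longrightarrow> 1 \<le> j \<Longrightarrow> j \<le> N - 1 \<Longrightarrow> i + 2 \<le> j
          \<Longrightarrow> mcong N [i, j] [j, i]"
| braid: "1 \<le> i \<Longrightarrow> i + 1 \<le> N - 1 \<Longrightarrow> mcong N [i, Suc i, i] [Suc i, i, Suc i]"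
| extra: "1 \<le> i \<Longrightarrow> i \<le> N - 2 \<Longrightarrow> mcong N [i, Suc i, i] [i, Suc i]"
| refl: "mcong N a a"
| sym: "mcong N a b \<Longrightarrow> mcong N b a"
| trans: "mcong N a b \<Longrightarrow> mcong N b c \<Longrightarrow> mcong N a c"
| ctxt: "mcong N a b \<Longrightarrow> mcong N (u @ a @ v) (u @ b @ v)"

definition Psi_word :: "nat \<Rightarrow> nat list \<Rightarrow> nat list" where
  "Psi_word N ws = map (\<lambda>i. N - i) ws"

text \<open>phi(Psi(pi_w)) as an element of M_N, i.e. a congruence class of words.\<close>
definition phiPsi :: "nat \<Rightarrow> (nat \<Rightarrow> nat) \<Rightarrow> nat list set" where
  "phiPsi N w = {b. \<exists>a. reduced_word N w a \<and> mcong N (Psi_word N a) b}"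

definition G :: "nat \<Rightarrow> nat list set \<Rightarrow> (nat \<Rightarrow> nat) set" where
  "G N m = {w. w permutes {1..N} \<and> phiPsi N w = m}"

definition contains_pattern :: "nat \<Rightarrow> (nat \<Rightarrow> nat) \<Rightarrow> nat list \<Rightarrow> bool" where
  "contains_pattern N w pat \<longleftrightarrow> (\<exists>idx. length idx = length pat \<and> sorted_wrt (<) idx \<and>
      set idx \<subseteq> {1..N} \<and>
      (\<forall>a < length pat. \<forall>b < length pat. w (idx ! a) < w (idx ! b) \<longleftrightarrow> pat ! a < pat ! b))"

definition avoids :: "nat \<Rightarrow> (nat \<Rightarrow> nat) \<Rightarrow> nat list \<Rightarrow> bool" where
  "avoids N w pat \<longleftrightarrow> \<not> contains_pattern N w pat"

end

(*
  Let the generator pi_k act on the positive integers by bump k, which sends k to k + 1 and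
  fixes every other number. These maps satisfy the 0-Hecke relations and, read through Psi, the
  extra relations of M_N, so the composite bump map of a word only depends on its image under
  phi o Psi. For a reduced word of w it is the prefix maximum function
  x |-> max (w 1, ..., w x). Conversely, every word is congruent to a normal form that only
  depends on its bump map, so the nonempty classes G_m are exactly the fibres of
  w |-> (prefix maxima of w).

  If two permutations u, v in a fibre first differ at position x, say u x < v x, then v x is not
  a prefix maximum of v; this yields a 321 pattern in v and a 312 pattern in u. So a fibre has at
  most one 321-avoiding and at most one 312-avoiding element. On the other hand, a 321 (resp. 312)
  pattern lets one swap two suitably close entries lying below an earlier larger entry: this keeps
  all prefix maxima and decreases (resp. increases) the length by one. Hence the shortest element
  of a fibre avoids 321 and the longest one avoids 312.
*)

theory Submission
  imports Defs
begin

section \<open>Bump maps\<close>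

definition bump :: "nat \<Rightarrow> nat \<Rightarrow> nat" where
  "bump k x = (if x = k then Suc k else x)"

definition bump_word :: "nat list \<Rightarrow> nat \<Rightarrow> nat" where
  "bump_word ws = foldr (\<lambda>k g. bump k \<circ> g) ws id"

lemma bump_word_Nil [simp]: "bump_word [] = id"
  by (simp add: bump_word_def)

lemma bump_word_Cons [simp]: "bump_word (k # ws) = bump k \<circ> bump_word ws"
  by (simp add: bump_word_def)

lemma bump_word_append [simp]: "bump_word (xs @ ys) = bump_word xs \<circ> bump_word ys"
  by (induction xs) auto

lemma bump_idem: "bump k \<circ> bump k = bump k"
  by (auto simp: bump_def fun_eq_iff)

lemma bump_commute: "a \<noteq> Suc b \<Longrightarrow> b \<noteq> Suc a \<Longrightarrow> bump a \<circ> bump b = bump b \<circ> bump a"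
  by (auto simp: bump_def fun_eq_iff)

lemma bump_braid: "bump (Suc k) \<circ> bump k \<circ> bump (Suc k) = bump k \<circ> bump (Suc k) \<circ> bump k"
  by (auto simp: bump_def fun_eq_iff)

lemma bump_extra: "bump (Suc k) \<circ> bump k \<circ> bump (Suc k) = bump (Suc k) \<circ> bump k"
  by (auto simp: bump_def fun_eq_iff)

lemma mcong_bump_word:
  assumes "mcong N a b"
  shows "bump_word (Psi_word N a) = bump_word (Psi_word N b)"
  using assms
proof (induction rule: mcong.induct)
  case (comm i j)
  then show ?case by (simp add: Psi_word_def bump_commute)
next
  case (braid i)
  then have "N - i = Suc (N - Suc i)" by simp
  then show ?case using bump_braid[of "N - Suc i"] by (simp add: Psi_word_def o_assoc)
next
  case (extra i)
  then have "N - i = Suc (N - Suc i)" by simp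
  then show ?case using bump_extra[of "N - Suc i"] by (simp add: Psi_word_def o_assoc)
qed (auto simp: Psi_word_def bump_idem)

lemma Psi_word_Psi_word: "set a \<subseteq> {..N} \<Longrightarrow> Psi_word N (Psi_word N a) = a"
  by (induction a) (auto simp: Psi_word_def)

definition psi_cong :: "nat \<Rightarrow> nat list \<Rightarrow> nat list \<Rightarrow> bool" where
  "psi_cong N a b \<longleftrightarrow> mcong N (Psi_word N a) (Psi_word N b)"

lemma psi_cong_refl [simp]: "psi_cong N a a"
  by (simp add: psi_cong_def mcong.refl)

lemma psi_cong_sym: "psi_cong N a b \<Longrightarrow> psi_cong N b a"
  by (simp add: psi_cong_def mcong.sym)

lemma psi_cong_trans [trans]: "psi_cong N a b \<Longrightarrow> psi_cong N b c \<Longrightarrow> psi_cong N a c"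
  unfolding psi_cong_def by (rule mcong.trans)

lemma psi_cong_append:
  assumes "psi_cong N a b" "psi_cong N c d"
  shows "psi_cong N (a @ c) (b @ d)"
proof -
  have "mcong N (Psi_word N a @ Psi_word N c) (Psi_word N b @ Psi_word N c)"
    using mcong.ctxt[of N _ _ "[]"] assms(1) by (simp add: psi_cong_def)
  moreover have "mcong N (Psi_word N b @ Psi_word N c) (Psi_word N b @ Psi_word N d)"
    using mcong.ctxt[of N _ _ _ "[]"] assms(2) by (simp add: psi_cong_def)
  ultimately show ?thesis
    unfolding psi_cong_def Psi_word_def by (simp add: mcong.trans[of N])
qed

lemma psi_cong_idem: "1 \<le> k \<Longrightarrow> k < N \<Longrightarrow> psi_cong N [k, k] [k]"
  using mcong.idem[of "N - k" N] by (simp add: psi_cong_def Psi_word_def)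

lemma psi_cong_commute: "1 \<le> a \<Longrightarrow> b < N \<Longrightarrow> a + 2 \<le> b \<Longrightarrow> psi_cong N [b, a] [a, b]"
  using mcong.comm[of "N - b" N "N - a"] by (simp add: psi_cong_def Psi_word_def)

lemma psi_cong_braid: "1 \<le> k \<Longrightarrow> Suc k < N \<Longrightarrow> psi_cong N [k, Suc k, k] [Suc k, k, Suc k]"
  using mcong.sym[OF mcong.braid[of "N - Suc k" N]]
  by (simp add: psi_cong_def Psi_word_def Suc_diff_Suc)

text \<open>Under \<open>Psi\<close> the extra relation of \<open>M_N\<close> reads
  \<open>s\<^sub>k\<^sub>+\<^sub>1 s\<^sub>k s\<^sub>k\<^sub>+\<^sub>1 = s\<^sub>k\<^sub>+\<^sub>1 s\<^sub>k\<close>.\<close>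
lemma psi_cong_extra: "1 \<le> k \<Longrightarrow> Suc k < N \<Longrightarrow> psi_cong N [Suc k, k, Suc k] [Suc k, k]"
  using mcong.extra[of "N - Suc k" N] by (simp add: psi_cong_def Psi_word_def Suc_diff_Suc)

section \<open>Normal forms\<close>

definition desc_run :: "nat \<Rightarrow> nat \<Rightarrow> nat list" where
  "desc_run b k = rev [k..<b]"

lemma set_desc_run [simp]: "set (desc_run b k) = {k..<b}"
  by (simp add: desc_run_def)

lemma desc_run_empty: "b \<le> k \<Longrightarrow> desc_run b k = []"
  by (simp add: desc_run_def)

lemma desc_run_snoc: "k < b \<Longrightarrow> desc_run b k = desc_run b (Suc k) @ [k]"
  by (simp add: desc_run_def upt_conv_Cons)

lemma desc_run_Cons: "k \<le> b \<Longrightarrow> desc_run (Suc b) k = b # desc_run b k"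
  by (simp add: desc_run_def)

lemma desc_run_split: "k \<le> x \<Longrightarrow> x < b \<Longrightarrow> desc_run b k = desc_run b (Suc x) @ x # desc_run x k"
  using upt_add_eq_append[of k x "b - x"] by (simp add: desc_run_def upt_conv_Cons)

lemma psi_cong_commute_word:
  assumes "\<forall>y\<in>set w. (y + 2 \<le> k \<or> k + 2 \<le> y) \<and> 1 \<le> y \<and> y < N" and "1 \<le> k" "k < N"
  shows "psi_cong N (k # w) (w @ [k])"
  using assms(1)
proof (induction w)
  case (Cons y w)
  then have "psi_cong N [k, y] [y, k]"
    using assms(2,3) psi_cong_commute[of y k N] psi_cong_sym[OF psi_cong_commute[of k y N]] by auto
  then have "psi_cong N (k # y # w) (y # k # w)"
    using psi_cong_append[OF _ psi_cong_refl] by fastforce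
  also have "psi_cong N \<dots> (y # w @ [k])"
    using psi_cong_append[OF psi_cong_refl[of N "[y]"]] Cons by simp
  finally show ?case by simp
qed simp

lemma psi_cong_absorb_left:
  assumes "1 \<le> k" "k \<le> x" "x < b" "b \<le> N"
  shows "psi_cong N (x # desc_run b k) (desc_run b k)"
proof (cases "Suc x = b")
  case True
  then have "desc_run b k = [x] @ desc_run x k"
    using desc_run_split[of k x b] assms by (simp add: desc_run_empty)
  then show ?thesis
    using psi_cong_append[OF psi_cong_idem[of x N] psi_cong_refl, of "desc_run x k"] assms by simp
next
  case False
  define R where "R = desc_run b (Suc (Suc x))"
  have run: "desc_run b k = R @ [Suc x, x] @ desc_run x k"
    using desc_run_split[of k x b] desc_run_snoc[of "Suc x" b] assms False by (simp add: R_def)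
  have "psi_cong N (x # R) (R @ [x])"
    by (rule psi_cong_commute_word) (use assms in \<open>auto simp: R_def\<close>)
  then have "psi_cong N (x # desc_run b k) (R @ [x, Suc x, x] @ desc_run x k)"
    using psi_cong_append[OF _ psi_cong_refl] unfolding run by fastforce
  also have "psi_cong N \<dots> (R @ [Suc x, x] @ desc_run x k)"
    using psi_cong_trans[OF psi_cong_braid psi_cong_extra, of x N] assms False
    by (intro psi_cong_append) auto
  finally show ?thesis
    unfolding run .
qed

lemma psi_cong_absorb_right:
  assumes "1 \<le> p" "p \<le> k" "k < a" "a \<le> N"
  shows "psi_cong N (desc_run a p @ [k]) (desc_run a p)"
proof (cases "k = p")
  case True
  then show ?thesis
    using psi_cong_append[OF psi_cong_refl psi_cong_idem[of k N], of "desc_run a (Suc k)"] assms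
    by (simp add: desc_run_snoc)
next
  case False
  then obtain j where j: "k = Suc j" "p \<le> j"
    using assms by (cases k) auto
  define L where "L = desc_run a (Suc k)"
  have run: "desc_run a p = L @ [Suc j, j] @ desc_run j p"
    using desc_run_split[of p k a] desc_run_Cons[of p j] assms j by (simp add: L_def)
  have "psi_cong N (desc_run j p @ [k]) (k # desc_run j p)"
    by (rule psi_cong_sym, rule psi_cong_commute_word) (use assms j in auto)
  then have "psi_cong N (desc_run a p @ [k]) (L @ [Suc j, j, Suc j] @ desc_run j p)"
    using psi_cong_append[OF psi_cong_refl[of N "L @ [Suc j, j]"]] unfolding run j by simp
  also have "psi_cong N \<dots> (L @ [Suc j, j] @ desc_run j p)"
    using psi_cong_extra[of j N] assms j by (intro psi_cong_append) auto
  finally show ?thesis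
    unfolding run .
qed

lemma psi_cong_absorb_word:
  assumes "\<forall>x\<in>set w. k \<le> x \<and> x < b" "1 \<le> k" "b \<le> N"
  shows "psi_cong N (w @ desc_run b k) (desc_run b k)"
  using assms(1)
proof (induction w)
  case (Cons x w)
  then have "psi_cong N (x # w @ desc_run b k) (x # desc_run b k)"
    using psi_cong_append[OF psi_cong_refl[of N "[x]"]] by simp
  also have "psi_cong N \<dots> (desc_run b k)"
    using Cons.prems assms by (intro psi_cong_absorb_left) auto
  finally show ?case by simp
qed simp

definition block_word :: "(nat \<Rightarrow> nat) \<Rightarrow> nat \<Rightarrow> nat list" where
  "block_word g x = (if x = 1 \<or> g (x - 1) \<noteq> g x then desc_run (g x) x else [])"

definition blocks :: "(nat \<Rightarrow> nat) \<Rightarrow> nat \<Rightarrow> nat \<Rightarrow> nat list" where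
  "blocks g i j = concat (map (block_word g) [i..<j])"

text \<open>A maximal interval \<open>[x, y]\<close> on which \<open>g\<close> is constant contributes the word
  \<open>s\<^bsub>g x - 1\<^esub> \<cdots> s\<^sub>x\<close>, whose bump word sends all of \<open>[x, g x]\<close> to \<open>g x\<close>.\<close>
definition normal_word :: "nat \<Rightarrow> (nat \<Rightarrow> nat) \<Rightarrow> nat list" where
  "normal_word N g = blocks g 1 (Suc N)"

definition mono_extensive :: "nat \<Rightarrow> (nat \<Rightarrow> nat) \<Rightarrow> bool" where
  "mono_extensive N g \<longleftrightarrow> (\<forall>x\<in>{1..N}. x \<le> g x \<and> g x \<le> N) \<and> mono_on {1..N} g"

lemma blocks_append: "i \<le> j \<Longrightarrow> j \<le> l \<Longrightarrow> blocks g i j @ blocks g j l = blocks g i l"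
  using upt_add_eq_append[of i j "l - j"] by (simp add: blocks_def)

lemma blocks_empty [simp]: "blocks g i i = []"
  by (simp add: blocks_def)

lemma blocks_singleton [simp]: "blocks g x (Suc x) = block_word g x"
  by (simp add: blocks_def)

lemma blocks_cong:
  assumes "\<And>x. i - 1 \<le> x \<Longrightarrow> x < j \<Longrightarrow> g x = h x"
  shows "blocks g i j = blocks h i j"
  unfolding blocks_def block_word_def using assms
  by (intro arg_cong[where f = concat] map_cong) auto

lemma blocks_constant:
  assumes "1 \<le> p" "p < q" "p = 1 \<or> g (p - 1) \<noteq> g p" "\<And>x. p \<le> x \<Longrightarrow> x < q \<Longrightarrow> g x = c"
  shows "blocks g p q = desc_run c p"
proof -
  have "block_word g x = []" if "p < x" "x < q" for x
    using that assms(1) assms(4)[of x] assms(4)[of "x - 1"] by (simp add: block_word_def)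
  then have "concat (map (block_word g) [Suc p..<q]) = []"
    by simp
  then show ?thesis
    using assms(2,3) assms(4)[of p] by (simp add: blocks_def upt_conv_Cons block_word_def)
qed

lemma set_blocks: "y \<in> set (blocks g i j) \<Longrightarrow> \<exists>x. i \<le> x \<and> x < j \<and> x \<le> y \<and> y < g x"
  by (auto simp: blocks_def block_word_def split: if_splits)

lemma normal_word_id [simp]: "normal_word N id = []"
  by (auto simp: normal_word_def blocks_def block_word_def desc_run_empty)

lemma mono_extensive_bounds: "mono_extensive N g \<Longrightarrow> 1 \<le> x \<Longrightarrow> x \<le> N \<Longrightarrow> x \<le> g x \<and> g x \<le> N"
  by (simp add: mono_extensive_def)

lemma mono_extensive_mono: "mono_extensive N g \<Longrightarrow> 1 \<le> x \<Longrightarrow> x \<le> y \<Longrightarrow> y \<le> N \<Longrightarrow> g x \<le> g y"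
  unfolding mono_extensive_def by (auto intro: mono_onD)

lemma mono_extensive_id: "mono_extensive N id"
  by (simp add: mono_extensive_def mono_on_def)

lemma mono_extensive_bump_comp:
  assumes "mono_extensive N g" "1 \<le> k" "k < N"
  shows "mono_extensive N (bump k \<circ> g)"
proof -
  have "mono (bump k)"
    by (auto simp: bump_def mono_def)
  then show ?thesis
    using assms unfolding mono_extensive_def mono_on_def
    by (fastforce simp: bump_def monoD)
qed

lemma mono_extensive_block_start:
  assumes g: "mono_extensive N g" and k: "1 \<le> k" "k \<le> N"
  obtains p where "1 \<le> p" "p \<le> k" "p = 1 \<or> g (p - 1) \<noteq> g p" "\<And>x. p \<le> x \<Longrightarrow> x \<le> k \<Longrightarrow> g x = g k"
proof -
  define p where "p = (LEAST p. 1 \<le> p \<and> g p = g k)"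
  have p: "1 \<le> p" "g p = g k" "p \<le> k"
    using LeastI[of "\<lambda>p. 1 \<le> p \<and> g p = g k" k] Least_le[of "\<lambda>p. 1 \<le> p \<and> g p = g k" k] k
    by (auto simp: p_def)
  have "g (p - 1) \<noteq> g p" if "p \<noteq> 1"
    using not_less_Least[of "p - 1" "\<lambda>p. 1 \<le> p \<and> g p = g k"] that p by (auto simp: p_def)
  moreover have "g x = g k" if "p \<le> x" "x \<le> k" for x
    using mono_extensive_mono[OF g, of p x] mono_extensive_mono[OF g, of x k] p that k by simp
  ultimately show ?thesis
    using that p by blast
qed

lemma normal_word_split:
  assumes "1 \<le> p" "p \<le> k" "k < N"
  shows "normal_word N h = blocks h 1 p @ blocks h p k @ block_word h k @ block_word h (Suc k)
    @ blocks h (Suc (Suc k)) (Suc N)"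
proof -
  have "blocks h 1 (Suc N) = blocks h 1 p @ blocks h p k @ blocks h k (Suc k)
      @ blocks h (Suc k) (Suc (Suc k)) @ blocks h (Suc (Suc k)) (Suc N)"
    using assms by (simp add: blocks_append del: blocks_singleton)
  then show ?thesis
    by (simp add: normal_word_def)
qed

lemma psi_cong_snoc_blocks:
  assumes g: "mono_extensive N g" and k: "1 \<le> k" "k < N" and i: "Suc (Suc k) \<le> i"
  shows "psi_cong N (blocks g i (Suc N) @ [k]) (k # blocks g i (Suc N))"
proof (rule psi_cong_sym, rule psi_cong_commute_word[OF _ k], rule ballI)
  fix y assume "y \<in> set (blocks g i (Suc N))"
  then obtain x where "i \<le> x" "x < Suc N" "x \<le> y" "y < g x"
    using set_blocks by blast
  then show "(y + 2 \<le> k \<or> k + 2 \<le> y) \<and> 1 \<le> y \<and> y < N"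
    using mono_extensive_bounds[OF g, of x] i by auto
qed

lemma block_word_bump_comp:
  assumes g: "mono_extensive N g" and k: "1 \<le> k" "k < N" and jump: "g k < g (Suc k)"
  shows "block_word (g \<circ> bump k) k = desc_run (g (Suc k)) k"
    and "block_word (g \<circ> bump k) (Suc k) = []"
proof -
  have "g (k - 1) < g (Suc k)" if "k \<noteq> 1"
  proof -
    have "g (k - 1) \<le> g k"
      using mono_extensive_mono[OF g, of "k - 1" k] that k by simp
    then show ?thesis
      using jump by simp
  qed
  then show "block_word (g \<circ> bump k) k = desc_run (g (Suc k)) k"
    using k by (auto simp: block_word_def bump_def)
  show "block_word (g \<circ> bump k) (Suc k) = []"
    using k by (simp add: block_word_def bump_def)
qed

lemma normal_word_at_block:
  assumes k: "k < N" and p: "1 \<le> p" "p \<le> k" "p = 1 \<or> g (p - 1) \<noteq> g p"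
    and const: "\<And>x. p \<le> x \<Longrightarrow> x \<le> k \<Longrightarrow> g x = c"
  shows "normal_word N g = blocks g 1 p @ desc_run c p @ block_word g (Suc k)
    @ blocks g (Suc (Suc k)) (Suc N)"
proof -
  have "blocks g p (Suc k) = desc_run c p"
    using p const by (intro blocks_constant) auto
  then have "blocks g p k @ block_word g k = desc_run c p"
    using blocks_append[of p k "Suc k" g] p(2) by simp
  then show ?thesis
    using normal_word_split[OF p(1,2) k, of g] by simp
qed

lemma normal_word_comp_bump:
  assumes "1 \<le> p" "p \<le> k" "k < N"
  shows "normal_word N (g \<circ> bump k) = blocks g 1 p @ blocks g p k @ block_word (g \<circ> bump k) k
    @ block_word (g \<circ> bump k) (Suc k) @ blocks g (Suc (Suc k)) (Suc N)"
proof -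
  have "blocks (g \<circ> bump k) 1 p = blocks g 1 p" "blocks (g \<circ> bump k) p k = blocks g p k"
    "blocks (g \<circ> bump k) (Suc (Suc k)) (Suc N) = blocks g (Suc (Suc k)) (Suc N)"
    using assms by (auto intro!: blocks_cong simp: bump_def)
  then show ?thesis
    using normal_word_split[OF assms, of "g \<circ> bump k"] by simp
qed

text \<open>Appending \<open>s\<^sub>k\<close> changes \<open>g\<close> only at \<open>k\<close>, whose value becomes \<open>g (k + 1)\<close>.
  The letter \<open>k\<close> moves left past the blocks starting beyond \<open>k + 1\<close>; it is then either absorbed
  by the run of the block containing \<open>k\<close> (if \<open>g k = g (k + 1)\<close>), or it extends the run of the
  block starting at \<open>k + 1\<close> down to \<open>k\<close>, which swallows the part of \<open>k\<close>'s old block at \<open>k\<close>.\<close>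
lemma psi_cong_normal_word_snoc:
  assumes g: "mono_extensive N g" and k: "1 \<le> k" "k < N"
  shows "psi_cong N (normal_word N g @ [k]) (normal_word N (g \<circ> bump k))"
proof -
  define a b where "a = g k" and "b = g (Suc k)"
  have ab: "k \<le> a" "a \<le> b" "Suc k \<le> b" "b \<le> N"
    using mono_extensive_bounds[OF g, of k] mono_extensive_bounds[OF g, of "Suc k"]
      mono_extensive_mono[OF g, of k "Suc k"] k by (auto simp: a_def b_def)
  obtain p where p: "1 \<le> p" "p \<le> k" "p = 1 \<or> g (p - 1) \<noteq> g p" "\<And>x. p \<le> x \<Longrightarrow> x \<le> k \<Longrightarrow> g x = a"
    using mono_extensive_block_start[OF g k(1) less_imp_le[OF k(2)]] unfolding a_def by blast
  define Pre Suf where "Pre = blocks g 1 p" and "Suf = blocks g (Suc (Suc k)) (Suc N)"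
  have "psi_cong N (Suf @ [k]) (k # Suf)"
    unfolding Suf_def by (rule psi_cong_snoc_blocks[OF g k]) simp
  then have "psi_cong N ((Pre @ desc_run a p @ block_word g (Suc k)) @ Suf @ [k])
      ((Pre @ desc_run a p @ block_word g (Suc k)) @ k # Suf)"
    by (rule psi_cong_append[OF psi_cong_refl])
  then have start: "psi_cong N (normal_word N g @ [k]) (Pre @ desc_run a p @ block_word g (Suc k) @ k # Suf)"
    using normal_word_at_block[OF k(2) p] by (simp add: Pre_def Suf_def)
  show ?thesis
  proof (cases "a = b")
    case True
    then have "g \<circ> bump k = g" and flat: "block_word g (Suc k) = []"
      using k by (auto simp: a_def b_def bump_def block_word_def fun_eq_iff)
    have "psi_cong N (normal_word N g @ [k]) (Pre @ (desc_run a p @ [k]) @ Suf)"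
      using start flat by simp
    also have "psi_cong N \<dots> (Pre @ desc_run a p @ Suf)"
      using psi_cong_absorb_right[of p k a N] p ab True k by (intro psi_cong_append) auto
    also have "\<dots> = normal_word N (g \<circ> bump k)"
      using normal_word_at_block[OF k(2) p] \<open>g \<circ> bump k = g\<close> flat by (simp add: Pre_def Suf_def)
    finally show ?thesis .
  next
    case False
    then have "block_word g (Suc k) = desc_run b (Suc k)"
      using k by (simp add: a_def b_def block_word_def)
    then have start': "psi_cong N (normal_word N g @ [k]) (Pre @ desc_run a p @ desc_run b k @ Suf)"
      using start desc_run_snoc[of k b] ab k by simp
    have split': "normal_word N (g \<circ> bump k) = Pre @ blocks g p k @ desc_run b k @ Suf"
      using normal_word_comp_bump[OF p(1,2) k(2), of g] block_word_bump_comp[OF g k] False ab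
      by (simp add: Pre_def Suf_def a_def b_def)
    show ?thesis
    proof (cases "p = k")
      case True
      have "psi_cong N (normal_word N g @ [k]) (Pre @ (desc_run a k @ desc_run b k) @ Suf)"
        using start' True by simp
      also have "psi_cong N \<dots> (Pre @ desc_run b k @ Suf)"
        using psi_cong_absorb_word[of "desc_run a k" k b N] ab k by (intro psi_cong_append) auto
      also have "\<dots> = normal_word N (g \<circ> bump k)"
        using split' True by simp
      finally show ?thesis .
    next
      case False
      then have "blocks g p k = desc_run a p"
        using p by (intro blocks_constant) auto
      then show ?thesis
        using start' split' by simp
    qed
  qed
qed

lemma mono_extensive_bump_word: "set a \<subseteq> {1..N - 1} \<Longrightarrow> mono_extensive N (bump_word a)"
  by (induction a) (auto simp: mono_extensive_id intro: mono_extensive_bump_comp)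

lemma psi_cong_normal_word: "set a \<subseteq> {1..N - 1} \<Longrightarrow> psi_cong N a (normal_word N (bump_word a))"
proof (induction a rule: rev_induct)
  case (snoc k a)
  then have a: "set a \<subseteq> {1..N - 1}" and k: "1 \<le> k" "k < N"
    by auto
  have "psi_cong N (a @ [k]) (normal_word N (bump_word a) @ [k])"
    using snoc.IH[OF a] by (rule psi_cong_append) simp
  also have "psi_cong N \<dots> (normal_word N (bump_word a \<circ> bump k))"
    by (rule psi_cong_normal_word_snoc[OF mono_extensive_bump_word[OF a] k])
  also have "normal_word N (bump_word a \<circ> bump k) = normal_word N (bump_word (a @ [k]))"
    by simp
  finally show ?case .
qed simp

theorem psi_cong_iff_bump_word_eq:
  assumes "set a \<subseteq> {1..N - 1}" "set b \<subseteq> {1..N - 1}"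
  shows "psi_cong N a b \<longleftrightarrow> bump_word a = bump_word b"
proof
  assume "psi_cong N a b"
  then have "bump_word (Psi_word N (Psi_word N a)) = bump_word (Psi_word N (Psi_word N b))"
    unfolding psi_cong_def by (rule mcong_bump_word)
  moreover have "Psi_word N (Psi_word N c) = c" if "set c \<subseteq> {1..N - 1}" for c
    using that by (intro Psi_word_Psi_word) force
  ultimately show "bump_word a = bump_word b"
    using assms by simp
next
  assume "bump_word a = bump_word b"
  then show "psi_cong N a b"
    using psi_cong_normal_word[OF assms(1)] psi_cong_normal_word[OF assms(2)]
    by (metis psi_cong_sym psi_cong_trans)
qed

section \<open>Inversions and reduced words\<close>

definition inversions :: "nat \<Rightarrow> (nat \<Rightarrow> nat) \<Rightarrow> (nat \<times> nat) set" where
  "inversions N w = {(i, j). 1 \<le> i \<and> i < j \<and> j \<le> N \<and> w i > w j}"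

lemma len_eq_card_inversions: "len N w = card (inversions N w)"
  by (simp add: len_def inversions_def)

lemma finite_inversions: "finite (inversions N w)"
  by (rule finite_subset[of _ "{1..N} \<times> {1..N}"]) (auto simp: inversions_def)

text \<open>The bijection from the inversions of \<open>v\<close> other than \<open>(j, k)\<close> to those of
  \<open>v \<circ> transpose j k\<close>: a pair with one end in \<open>{j, k}\<close> and the other strictly between them
  keeps its inversion status (when no value of \<open>v\<close> between positions \<open>j\<close> and \<open>k\<close> lies between
  \<open>v k\<close> and \<open>v j\<close>), every other pair is moved by the transposition.\<close>
definition swap_pair :: "nat \<Rightarrow> nat \<Rightarrow> nat \<times> nat \<Rightarrow> nat \<times> nat" where
  "swap_pair j k = (\<lambda>(p, q). if p = j \<and> q < k \<or> q = k \<and> j < p then (p, q)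
     else (transpose j k p, transpose j k q))"

definition ordered_pairs :: "nat \<Rightarrow> (nat \<times> nat) set" where
  "ordered_pairs N = {(p, q). 1 \<le> p \<and> p < q \<and> q \<le> N}"

lemma inversions_subset_ordered_pairs: "inversions N w \<subseteq> ordered_pairs N"
  by (auto simp: inversions_def ordered_pairs_def)

lemma swap_pair_swap_pair:
  "j < k \<Longrightarrow> pq \<in> ordered_pairs N - {(j, k)} \<Longrightarrow> swap_pair j k (swap_pair j k pq) = pq"
  by (cases pq) (auto simp: ordered_pairs_def swap_pair_def transpose_def)

lemma swap_pair_in_ordered_pairs:
  "1 \<le> j \<Longrightarrow> j < k \<Longrightarrow> k \<le> N \<Longrightarrow> pq \<in> ordered_pairs N - {(j, k)}
    \<Longrightarrow> swap_pair j k pq \<in> ordered_pairs N - {(j, k)}"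
  by (cases pq) (auto simp: ordered_pairs_def swap_pair_def transpose_def)

lemma swap_pair_mem_inversions_iff:
  assumes v: "inj v" and jk: "1 \<le> j" "j < k" "k \<le> N" "v k < v j"
    and gap: "\<And>x. j < x \<Longrightarrow> x < k \<Longrightarrow> \<not> (v k < v x \<and> v x < v j)"
    and pq: "(p, q) \<in> ordered_pairs N - {(j, k)}"
  shows "swap_pair j k (p, q) \<in> inversions N (v \<circ> transpose j k) \<longleftrightarrow> (p, q) \<in> inversions N v"
proof (cases "p = j \<and> q < k \<or> q = k \<and> j < p")
  case True
  then consider "p = j" "j < q" "q < k" | "q = k" "j < p" "p < k"
    using pq by (auto simp: ordered_pairs_def)
  then show ?thesis
  proof cases
    case 1
    then have "v q < v j \<longleftrightarrow> v q < v k"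
      using gap[of q] jk injD[OF v, of q k] by fastforce
    then show ?thesis
      using 1 pq by (auto simp: swap_pair_def inversions_def ordered_pairs_def)
  next
    case 2
    then have "v k < v p \<longleftrightarrow> v j < v p"
      using gap[of p] jk injD[OF v, of p j] by fastforce
    then show ?thesis
      using 2 pq jk by (auto simp: swap_pair_def inversions_def ordered_pairs_def)
  qed
next
  case False
  then have "transpose j k p < transpose j k q" "1 \<le> transpose j k p \<longleftrightarrow> 1 \<le> p"
    "transpose j k q \<le> N \<longleftrightarrow> q \<le> N"
    using pq jk by (auto simp: transpose_def ordered_pairs_def)
  then show ?thesis
    using False pq by (auto simp: swap_pair_def inversions_def ordered_pairs_def)
qed

lemma len_comp_transpose:
  assumes v: "v permutes {1..N}" and jk: "1 \<le> j" "j < k" "k \<le> N" "v k < v j"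
    and gap: "\<And>x. j < x \<Longrightarrow> x < k \<Longrightarrow> \<not> (v k < v x \<and> v x < v j)"
  shows "Suc (len N (v \<circ> transpose j k)) = len N v"
proof -
  let ?A = "ordered_pairs N - {(j, k)}"
  let ?\<sigma> = "swap_pair j k"
  have \<sigma>_A: "?\<sigma> pq \<in> ?A" and \<sigma>_\<sigma>: "?\<sigma> (?\<sigma> pq) = pq" if "pq \<in> ?A" for pq
    using that swap_pair_in_ordered_pairs[OF jk(1-3)] swap_pair_swap_pair[OF jk(2), of pq N] by auto
  have iff: "?\<sigma> pq \<in> inversions N (v \<circ> transpose j k) \<longleftrightarrow> pq \<in> inversions N v" if "pq \<in> ?A" for pq
    using that swap_pair_mem_inversions_iff[OF permutes_inj[OF v] jk gap] by (cases pq) auto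
  have "(j, k) \<notin> inversions N (v \<circ> transpose j k)"
    using jk by (auto simp: inversions_def)
  then have sub: "inversions N (v \<circ> transpose j k) \<subseteq> ?A"
    using inversions_subset_ordered_pairs by blast
  have "inversions N (v \<circ> transpose j k) = ?\<sigma> ` (inversions N v - {(j, k)})"
  proof
    show "?\<sigma> ` (inversions N v - {(j, k)}) \<subseteq> inversions N (v \<circ> transpose j k)"
      using iff inversions_subset_ordered_pairs by blast
    show "inversions N (v \<circ> transpose j k) \<subseteq> ?\<sigma> ` (inversions N v - {(j, k)})"
    proof
      fix pq assume pq: "pq \<in> inversions N (v \<circ> transpose j k)"
      then have "pq \<in> ?A"
        using sub by blast
      then have "?\<sigma> pq \<in> inversions N v - {(j, k)}" and "pq = ?\<sigma> (?\<sigma> pq)"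
        using iff[of "?\<sigma> pq"] \<sigma>_A \<sigma>_\<sigma> pq by auto
      then show "pq \<in> ?\<sigma> ` (inversions N v - {(j, k)})"
        by blast
    qed
  qed
  moreover have "inj_on ?\<sigma> (inversions N v - {(j, k)})"
    by (rule inj_on_inverseI[of _ ?\<sigma>]) (use \<sigma>_\<sigma> inversions_subset_ordered_pairs in blast)
  ultimately have "card (inversions N (v \<circ> transpose j k)) = card (inversions N v - {(j, k)})"
    by (simp add: card_image)
  moreover have "(j, k) \<in> inversions N v"
    using jk by (auto simp: inversions_def)
  then have "card (inversions N v) = Suc (card (inversions N v - {(j, k)}))"
    using finite_inversions by (metis card.remove)
  ultimately show ?thesis
    by (simp add: len_eq_card_inversions)
qed

lemma s_gen_comp_eq_comp_transpose:
  assumes "inj w" "w p = k" "w q = Suc k"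
  shows "s_gen k \<circ> w = w \<circ> transpose p q"
proof
  fix x
  have "w x = k \<longleftrightarrow> x = p" "w x = Suc k \<longleftrightarrow> x = q"
    using assms injD[OF assms(1)] by auto
  then show "(s_gen k \<circ> w) x = (w \<circ> transpose p q) x"
    using assms(2,3) by (auto simp: s_gen_def transpose_def)
qed

lemma s_gen_comp_permutes: "w permutes {1..N} \<Longrightarrow> 1 \<le> k \<Longrightarrow> k < N \<Longrightarrow> s_gen k \<circ> w permutes {1..N}"
  unfolding s_gen_def by (rule permutes_compose) (auto intro: permutes_swap_id)

lemma permutes_inv_in_range:
  assumes "w permutes {1..N}" "y \<in> {1..N}"
  shows "inv w y \<in> {1..N}" "w (inv w y) = y"
  using permutes_in_image[OF permutes_inv[OF assms(1)]] assms permutes_inverses(1)[OF assms(1)] by auto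

lemma len_s_gen_comp:
  assumes w: "w permutes {1..N}" and k: "1 \<le> k" "k < N"
  shows "inv w k < inv w (Suc k) \<Longrightarrow> len N (s_gen k \<circ> w) = Suc (len N w)"
    and "inv w (Suc k) < inv w k \<Longrightarrow> Suc (len N (s_gen k \<circ> w)) = len N w"
proof -
  define p q where "p = inv w k" and "q = inv w (Suc k)"
  have pq: "p \<in> {1..N}" "q \<in> {1..N}" "w p = k" "w q = Suc k"
    using permutes_inv_in_range[OF w] k by (auto simp: p_def q_def)
  have inj: "inj w" "inj (s_gen k \<circ> w)"
    using w s_gen_comp_permutes[OF w k] by (auto intro: permutes_inj)
  show "len N (s_gen k \<circ> w) = Suc (len N w)" if "inv w k < inv w (Suc k)"
  proof -
    have "s_gen k \<circ> w \<circ> transpose p q = w"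
      using s_gen_comp_eq_comp_transpose[OF inj(1) pq(3,4)] by (simp add: o_assoc[symmetric])
    moreover have "Suc (len N (s_gen k \<circ> w \<circ> transpose p q)) = len N (s_gen k \<circ> w)"
      by (rule len_comp_transpose[OF s_gen_comp_permutes[OF w k]])
        (use pq that in \<open>auto simp: p_def q_def s_gen_def\<close>)
    ultimately show ?thesis
      by simp
  qed
  show "Suc (len N (s_gen k \<circ> w)) = len N w" if "inv w (Suc k) < inv w k"
    using len_comp_transpose[OF w, of q p] s_gen_comp_eq_comp_transpose[OF inj(1) pq(3,4)]
      pq that by (simp add: p_def q_def transpose_commute)
qed

lemma word_prod_Nil [simp]: "word_prod [] = id"
  by (simp add: word_prod_def)

lemma word_prod_Cons [simp]: "word_prod (k # ws) = s_gen k \<circ> word_prod ws"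
  by (simp add: word_prod_def)

lemma word_prod_permutes: "set ws \<subseteq> {1..N - 1} \<Longrightarrow> word_prod ws permutes {1..N}"
proof (induction ws)
  case (Cons k ws)
  then show ?case
    unfolding word_prod_Cons by (intro s_gen_comp_permutes) auto
qed (simp add: permutes_id)

lemma len_id [simp]: "len N id = 0"
proof -
  have "inversions N id = {}"
    by (auto simp: inversions_def)
  then show ?thesis
    by (simp add: len_eq_card_inversions)
qed

lemma len_word_prod_le: "set ws \<subseteq> {1..N - 1} \<Longrightarrow> len N (word_prod ws) \<le> length ws"
proof (induction ws)
  case (Cons k ws)
  then have w: "word_prod ws permutes {1..N}" and k: "1 \<le> k" "k < N"
    using word_prod_permutes by auto
  have "inv (word_prod ws) k \<noteq> inv (word_prod ws) (Suc k)"
    using permutes_inv_in_range[OF w, of k] permutes_inv_in_range[OF w, of "Suc k"] k by force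
  then have "len N (s_gen k \<circ> word_prod ws) \<le> Suc (len N (word_prod ws))"
    using len_s_gen_comp[OF w k] by fastforce
  moreover have "len N (word_prod ws) \<le> length ws"
    using Cons by simp
  ultimately show ?case
    unfolding word_prod_Cons length_Cons by linarith
qed simp

lemma permutes_strict_mono_eq_id:
  assumes h: "h permutes {1..N}" and mono: "\<And>x. 1 \<le> x \<Longrightarrow> x < N \<Longrightarrow> h x < h (Suc x)"
  shows "h = id"
proof -
  have ge: "x \<le> h x" if "x \<in> {1..N}" for x
    using that
  proof (induction x)
    case (Suc x)
    then show ?case
      using mono[of x] permutes_in_image[OF h, of 1] by (cases "x = 0") auto
  qed simp
  have "sum h {1..N} = sum id {1..N}"
    using sum.permute[OF h, of id] by simp
  then have "h x = x" if "x \<in> {1..N}" for x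
    using sum_mono_inv[of id "{1..N}" h x] ge that by simp
  then show ?thesis
    using permutes_not_in[OF h] by fastforce
qed

lemma reduced_word_exists: "w permutes {1..N} \<Longrightarrow> \<exists>ws. reduced_word N w ws"
proof (induction "len N w" arbitrary: w rule: less_induct)
  case less
  show ?case
  proof (cases "w = id")
    case True
    then show ?thesis
      by (intro exI[of _ "[]"]) (simp add: reduced_word_def)
  next
    case False
    have "\<exists>k. 1 \<le> k \<and> k < N \<and> inv w (Suc k) < inv w k"
    proof (rule ccontr)
      assume "\<nexists>k. 1 \<le> k \<and> k < N \<and> inv w (Suc k) < inv w k"
      then have "inv w x < inv w (Suc x)" if "1 \<le> x" "x < N" for x
        using that permutes_inj[OF permutes_inv[OF less.prems]] by (metis injD linorder_neqE_nat n_not_Suc_n)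
      then have "inv w = id"
        by (rule permutes_strict_mono_eq_id[OF permutes_inv[OF less.prems]])
      then show False
        using False permutes_inv_inv[OF less.prems] by (metis inv_id)
    qed
    then obtain k where k: "1 \<le> k" "k < N" "inv w (Suc k) < inv w k"
      by blast
    have shorter: "Suc (len N (s_gen k \<circ> w)) = len N w"
      using len_s_gen_comp(2)[OF less.prems k(1,2) k(3)] .
    obtain ws where "reduced_word N (s_gen k \<circ> w) ws"
      using less.hyps[OF _ s_gen_comp_permutes[OF less.prems k(1,2)]] shorter by auto
    moreover have "s_gen k \<circ> (s_gen k \<circ> w) = w"
      by (auto simp: s_gen_def fun_eq_iff)
    ultimately have "reduced_word N w (k # ws)"
      using k shorter by (auto simp: reduced_word_def)
    then show ?thesis
      by blast
  qed
qed

section \<open>Prefix maxima and the classes \<open>G_m\<close>\<close>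

definition prefix_max :: "nat \<Rightarrow> (nat \<Rightarrow> nat) \<Rightarrow> nat \<Rightarrow> nat" where
  "prefix_max N w x = (if x \<in> {1..N} then Max (w ` {1..x}) else x)"

lemma prefix_max_id [simp]: "prefix_max N id = id"
proof
  fix x
  show "prefix_max N id x = id x"
    by (cases "x \<in> {1..N}") (auto simp: prefix_max_def intro: Max_eqI)
qed

lemma Max_image_transpose_Suc:
  assumes A: "finite A" "A \<noteq> {}" and order: "Suc k \<in> A \<Longrightarrow> k \<in> A"
  shows "Max (transpose k (Suc k) ` A) = bump k (Max A)"
proof (rule Max_eqI)
  let ?M = "Max A"
  have le: "y \<le> ?M" if "y \<in> A" for y
    using A that by simp
  have M: "?M \<in> A"
    using A by simp
  show "finite (transpose k (Suc k) ` A)"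
    using A by simp
  show "y \<le> bump k ?M" if "y \<in> transpose k (Suc k) ` A" for y
    using that le M by (force simp: transpose_def bump_def)
  show "bump k ?M \<in> transpose k (Suc k) ` A"
  proof (cases "?M = Suc k")
    case True
    then show ?thesis
      using order M by (auto simp: bump_def intro!: image_eqI[of _ _ k])
  next
    case False
    then show ?thesis
      using M by (auto simp: bump_def transpose_def intro!: image_eqI[of _ _ ?M])
  qed
qed

lemma prefix_max_s_gen_comp:
  assumes u: "u permutes {1..N}" and k: "1 \<le> k" "k < N" and order: "inv u k < inv u (Suc k)"
  shows "prefix_max N (s_gen k \<circ> u) = bump k \<circ> prefix_max N u"
proof
  fix x
  show "prefix_max N (s_gen k \<circ> u) x = (bump k \<circ> prefix_max N u) x"
  proof (cases "x \<in> {1..N}")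
    case True
    have "k \<in> u ` {1..x}" if "Suc k \<in> u ` {1..x}"
    proof -
      have "inv u (Suc k) \<le> x"
        using that permutes_inverses(2)[OF u] by auto
      then show ?thesis
        using order permutes_inv_in_range[OF u, of k] k by (auto intro!: image_eqI)
    qed
    then show ?thesis
      using True Max_image_transpose_Suc[of "u ` {1..x}" k]
      by (simp add: prefix_max_def s_gen_def image_comp)
  next
    case False
    then have "prefix_max N (s_gen k \<circ> u) x = x" "prefix_max N u x = x" "x \<noteq> k"
      using k by (auto simp: prefix_max_def)
    then show ?thesis
      by (simp add: bump_def)
  qed
qed

lemma bump_word_reduced:
  "set ws \<subseteq> {1..N - 1} \<Longrightarrow> len N (word_prod ws) = length ws \<Longrightarrow>
    bump_word ws = prefix_max N (word_prod ws)"
proof (induction ws)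
  case (Cons k ws)
  define u where "u = word_prod ws"
  have ws: "set ws \<subseteq> {1..N - 1}" and k: "1 \<le> k" "k < N"
    using Cons.prems(1) by auto
  have u: "u permutes {1..N}" "len N u \<le> length ws"
    using word_prod_permutes[OF ws] len_word_prod_le[OF ws] by (simp_all add: u_def)
  have len_ku: "len N (s_gen k \<circ> u) = Suc (length ws)"
    using Cons.prems(2) unfolding word_prod_Cons length_Cons u_def .
  have "inv u k \<noteq> inv u (Suc k)"
    using permutes_inv_in_range[OF u(1), of k] permutes_inv_in_range[OF u(1), of "Suc k"] k by force
  moreover have "\<not> inv u (Suc k) < inv u k"
    using len_s_gen_comp(2)[OF u(1) k] len_ku u(2) by fastforce
  ultimately have order: "inv u k < inv u (Suc k)"
    by simp
  then have "len N u = length ws"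
    using len_s_gen_comp(1)[OF u(1) k] len_ku by simp
  then have "bump_word ws = prefix_max N u"
    using Cons.IH[OF ws] by (simp add: u_def)
  then show ?case
    unfolding bump_word_Cons word_prod_Cons u_def[symmetric] prefix_max_s_gen_comp[OF u(1) k order]
    by simp
qed simp

lemma reduced_word_bump_word: "reduced_word N w ws \<Longrightarrow> bump_word ws = prefix_max N w"
  using bump_word_reduced by (auto simp: reduced_word_def)

lemma phiPsi_eq_class:
  assumes ws: "reduced_word N w ws"
  shows "phiPsi N w = {c. mcong N (Psi_word N ws) c}"
proof -
  have "mcong N (Psi_word N ws) (Psi_word N ws')" if ws': "reduced_word N w ws'" for ws'
    using psi_cong_iff_bump_word_eq[of ws N ws'] ws ws' reduced_word_bump_word[OF ws]
      reduced_word_bump_word[OF ws'] by (simp add: reduced_word_def psi_cong_def)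
  then show ?thesis
    using ws unfolding phiPsi_def by (blast intro: mcong.trans mcong.sym)
qed

theorem phiPsi_eq_iff_prefix_max_eq:
  assumes "u permutes {1..N}" "w permutes {1..N}"
  shows "phiPsi N u = phiPsi N w \<longleftrightarrow> prefix_max N u = prefix_max N w"
proof -
  obtain a b where a: "reduced_word N u a" and b: "reduced_word N w b"
    using reduced_word_exists assms by blast
  have "phiPsi N u = phiPsi N w \<longleftrightarrow> mcong N (Psi_word N a) (Psi_word N b)"
    unfolding phiPsi_eq_class[OF a] phiPsi_eq_class[OF b]
    by (blast intro: mcong.refl mcong.sym mcong.trans)
  also have "\<dots> \<longleftrightarrow> bump_word a = bump_word b"
    using psi_cong_iff_bump_word_eq[of a N b] a b by (simp add: reduced_word_def psi_cong_def)
  also have "\<dots> \<longleftrightarrow> prefix_max N u = prefix_max N w"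
    using reduced_word_bump_word[OF a] reduced_word_bump_word[OF b] by simp
  finally show ?thesis .
qed

definition prefix_max_fiber :: "nat \<Rightarrow> (nat \<Rightarrow> nat) \<Rightarrow> (nat \<Rightarrow> nat) set" where
  "prefix_max_fiber N w = {u. u permutes {1..N} \<and> prefix_max N u = prefix_max N w}"

lemma G_eq_prefix_max_fiber: "w \<in> G N m \<Longrightarrow> G N m = prefix_max_fiber N w"
  using phiPsi_eq_iff_prefix_max_eq unfolding G_def prefix_max_fiber_def by blast

lemma finite_prefix_max_fiber: "finite (prefix_max_fiber N w)"
  using finite_permutations[of "{1..N}"] by (auto simp: prefix_max_fiber_def elim: finite_subset[rotated])

section \<open>Patterns in the fibres of the prefix maxima\<close>

lemma contains_pattern_length3:
  "contains_pattern N w [a, b, c] \<longleftrightarrow> (\<exists>i j k. 1 \<le> i \<and> i < j \<and> j < k \<and> k \<le> N \<and>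
     (w i < w j \<longleftrightarrow> a < b) \<and> (w j < w i \<longleftrightarrow> b < a) \<and> (w i < w k \<longleftrightarrow> a < c) \<and>
     (w k < w i \<longleftrightarrow> c < a) \<and> (w j < w k \<longleftrightarrow> b < c) \<and> (w k < w j \<longleftrightarrow> c < b))"
proof
  assume "contains_pattern N w [a, b, c]"
  then obtain idx where idx: "length idx = length [a, b, c]" "sorted_wrt (<) idx" "set idx \<subseteq> {1..N}"
    "\<forall>p<length [a, b, c]. \<forall>q<length [a, b, c].
       w (idx ! p) < w (idx ! q) \<longleftrightarrow> [a, b, c] ! p < [a, b, c] ! q"
    unfolding contains_pattern_def by blast
  then obtain i j k where "idx = [i, j, k]"
    by (auto simp: numeral_3_eq_3 length_Suc_conv)
  then show "\<exists>i j k. 1 \<le> i \<and> i < j \<and> j < k \<and> k \<le> N \<and>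
     (w i < w j \<longleftrightarrow> a < b) \<and> (w j < w i \<longleftrightarrow> b < a) \<and> (w i < w k \<longleftrightarrow> a < c) \<and>
     (w k < w i \<longleftrightarrow> c < a) \<and> (w j < w k \<longleftrightarrow> b < c) \<and> (w k < w j \<longleftrightarrow> c < b)"
    using idx by (auto simp: numeral_3_eq_3 All_less_Suc)
next
  assume "\<exists>i j k. 1 \<le> i \<and> i < j \<and> j < k \<and> k \<le> N \<and>
     (w i < w j \<longleftrightarrow> a < b) \<and> (w j < w i \<longleftrightarrow> b < a) \<and> (w i < w k \<longleftrightarrow> a < c) \<and>
     (w k < w i \<longleftrightarrow> c < a) \<and> (w j < w k \<longleftrightarrow> b < c) \<and> (w k < w j \<longleftrightarrow> c < b)"
  then obtain i j k where "1 \<le> i" "i < j" "j < k" "k \<le> N"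
     "w i < w j \<longleftrightarrow> a < b" "w j < w i \<longleftrightarrow> b < a" "w i < w k \<longleftrightarrow> a < c"
     "w k < w i \<longleftrightarrow> c < a" "w j < w k \<longleftrightarrow> b < c" "w k < w j \<longleftrightarrow> c < b"
    by blast
  then show "contains_pattern N w [a, b, c]"
    unfolding contains_pattern_def
    by (intro exI[of _ "[i, j, k]"]) (auto simp: numeral_3_eq_3 All_less_Suc)
qed

lemma contains_321_iff:
  "contains_pattern N w [3, 2, 1] \<longleftrightarrow> (\<exists>i j k. 1 \<le> i \<and> i < j \<and> j < k \<and> k \<le> N \<and> w k < w j \<and> w j < w i)"
  unfolding contains_pattern_length3 by (auto 0 4)

lemma contains_312_iff:
  "contains_pattern N w [3, 1, 2] \<longleftrightarrow> (\<exists>i j k. 1 \<le> i \<and> i < j \<and> j < k \<and> k \<le> N \<and> w j < w k \<and> w k < w i)"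
  unfolding contains_pattern_length3 by (auto 0 4)

lemma Max_prefix_comp_transpose_le:
  fixes v :: "nat \<Rightarrow> nat"
  assumes "1 \<le> i" "i < j" "j < k" "v j < v i" "v k < v i" "1 \<le> x"
  shows "Max ((v \<circ> transpose j k) ` {1..x}) \<le> Max (v ` {1..x})"
proof -
  have "\<exists>y\<in>{1..x}. v (transpose j k s) \<le> v y" if s: "s \<in> {1..x}" for s
  proof -
    consider "s = j" "x < k" | "s = j" "k \<le> x" | "s = k" | "s \<noteq> j" "s \<noteq> k"
      by linarith
    then show ?thesis
    proof cases
      case 1
      then show ?thesis
        using s assms by (intro bexI[of _ i]) auto
    next
      case 2
      then show ?thesis
        using s assms by (intro bexI[of _ k]) auto
    next
      case 3
      then show ?thesis
        using s assms by (intro bexI[of _ j]) auto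
    qed (use s in auto)
  qed
  then have "v (transpose j k s) \<le> Max (v ` {1..x})" if "s \<in> {1..x}" for s
    using that by (meson Max_ge finite_atLeastAtMost finite_imageI image_eqI order_trans)
  then show ?thesis
    using assms(6) by (simp add: Max_le_iff)
qed

lemma prefix_max_comp_transpose:
  assumes "1 \<le> i" "i < j" "j < k" "v j < v i" "v k < v i"
  shows "prefix_max N (v \<circ> transpose j k) = prefix_max N v"
proof
  fix x
  have "Max ((v \<circ> transpose j k) ` {1..x}) = Max (v ` {1..x})" if "1 \<le> x"
  proof (rule antisym)
    show "Max ((v \<circ> transpose j k) ` {1..x}) \<le> Max (v ` {1..x})"
      by (rule Max_prefix_comp_transpose_le[OF assms that])
    have "Max ((v \<circ> transpose j k \<circ> transpose j k) ` {1..x}) \<le> Max ((v \<circ> transpose j k) ` {1..x})"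
      by (rule Max_prefix_comp_transpose_le[of i]) (use assms that in \<open>auto simp: transpose_def\<close>)
    then show "Max (v ` {1..x}) \<le> Max ((v \<circ> transpose j k) ` {1..x})"
      by (simp add: o_assoc[symmetric])
  qed
  then show "prefix_max N (v \<circ> transpose j k) x = prefix_max N v x"
    by (simp add: prefix_max_def)
qed

lemma permutes_first_difference:
  fixes u v :: "nat \<Rightarrow> nat"
  assumes u: "u permutes {1..N}" and v: "v permutes {1..N}" and "u \<noteq> v"
  obtains x' where "x' \<in> {1..N}" "u x' \<noteq> v x'" "\<And>t. 1 \<le> t \<Longrightarrow> t < x' \<Longrightarrow> u t = v t"
proof -
  obtain x where "u x \<noteq> v x"
    using \<open>u \<noteq> v\<close> by blast
  define x' where "x' = (LEAST x. 1 \<le> x \<and> u x \<noteq> v x)"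
  have x: "x \<in> {1..N}"
    using \<open>u x \<noteq> v x\<close> permutes_not_in[OF u] permutes_not_in[OF v] by metis
  then have "1 \<le> x' \<and> u x' \<noteq> v x'" "x' \<le> x"
    using LeastI[of "\<lambda>x. 1 \<le> x \<and> u x \<noteq> v x" x] Least_le[of "\<lambda>x. 1 \<le> x \<and> u x \<noteq> v x" x]
      \<open>u x \<noteq> v x\<close> by (auto simp: x'_def)
  moreover have "u t = v t" if "1 \<le> t" "t < x'" for t
    using not_less_Least[of t "\<lambda>x. 1 \<le> x \<and> u x \<noteq> v x"] that by (auto simp: x'_def)
  ultimately show ?thesis
    using x by (intro that[of x']) auto
qed

text \<open>If two permutations with the same prefix maxima first differ at \<open>x\<close>, say \<open>u x < v x\<close>,
  then \<open>v x\<close> is not a prefix maximum of \<open>v\<close>, so some earlier entry \<open>v i\<close> exceeds it. The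
  value \<open>u x\<close> sits to the right of \<open>x\<close> in \<open>v\<close> and the value \<open>v x\<close> to the right of \<open>x\<close> in \<open>u\<close>.\<close>
lemma contains_patterns_at_first_difference:
  assumes u: "u permutes {1..N}" and v: "v permutes {1..N}" and eq: "prefix_max N u = prefix_max N v"
    and x: "x \<in> {1..N}" and agree: "\<And>t. 1 \<le> t \<Longrightarrow> t < x \<Longrightarrow> u t = v t" and less: "u x < v x"
  shows "contains_pattern N v [3, 2, 1]" "contains_pattern N u [3, 1, 2]"
proof -
  have later: "x < inv w (f x)" if w: "w permutes {1..N}" "f permutes {1..N}"
    and agree': "\<And>t. 1 \<le> t \<Longrightarrow> t < x \<Longrightarrow> w t = f t" and "w x \<noteq> f x" for w f
  proof -
    have "inv w (f x) \<noteq> x" "\<not> (1 \<le> inv w (f x) \<and> inv w (f x) < x)"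
      using that permutes_inverses[OF w(1)] permutes_inj[OF w(2)] x by (metis injD)+
    then show ?thesis
      using permutes_inv_in_range[OF w(1), of "f x"] permutes_in_image[OF w(2)] x by auto
  qed
  have not_max: "v x \<noteq> Max (v ` {1..x})"
  proof
    assume "v x = Max (v ` {1..x})"
    also have "\<dots> = Max (u ` {1..x})"
      using fun_cong[OF eq, of x] x by (simp add: prefix_max_def)
    finally have "v x \<in> u ` {1..x}"
      using Max_in[of "u ` {1..x}"] x by auto
    then obtain t where "t \<in> {1..x}" "u t = v x"
      by (metis imageE)
    then show False
      using agree[of t] less injD[OF permutes_inj[OF v], of t x] by (cases "t = x") auto
  qed
  have "Max (v ` {1..x}) \<in> v ` {1..x}"
    using x by (intro Max_in) auto
  then obtain i where "i \<in> {1..x}" "v i = Max (v ` {1..x})"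
    by (metis imageE)
  then have i: "1 \<le> i" "i < x" "v x < v i"
    using not_max Max_ge[of "v ` {1..x}" "v x"] x by (auto simp: le_less)
  define y z where "y = inv v (u x)" and "z = inv u (v x)"
  have "x < y" "x < z"
    using later[OF v u] later[OF u v] agree less by (auto simp: y_def z_def)
  moreover have "y \<le> N" "z \<le> N" "v y = u x" "u z = v x"
    using permutes_inv_in_range[OF v, of "u x"] permutes_inv_in_range[OF u, of "v x"]
      permutes_in_image[OF u] permutes_in_image[OF v] x by (auto simp: y_def z_def)
  ultimately show "contains_pattern N v [3, 2, 1]" "contains_pattern N u [3, 1, 2]"
    unfolding contains_321_iff contains_312_iff using i less agree[of i] by metis+
qed

lemma contains_patterns_if_prefix_max_eq:
  assumes u: "u permutes {1..N}" and v: "v permutes {1..N}" and eq: "prefix_max N u = prefix_max N v"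
    and "u \<noteq> v"
  shows "contains_pattern N u [3, 2, 1] \<or> contains_pattern N v [3, 2, 1]"
    and "contains_pattern N u [3, 1, 2] \<or> contains_pattern N v [3, 1, 2]"
proof -
  obtain x where x: "x \<in> {1..N}" "u x \<noteq> v x" and agree: "\<And>t. 1 \<le> t \<Longrightarrow> t < x \<Longrightarrow> u t = v t"
    using permutes_first_difference[OF u v \<open>u \<noteq> v\<close>] by blast
  then consider "u x < v x" | "v x < u x"
    by linarith
  then show "contains_pattern N u [3, 2, 1] \<or> contains_pattern N v [3, 2, 1]"
    and "contains_pattern N u [3, 1, 2] \<or> contains_pattern N v [3, 1, 2]"
    using contains_patterns_at_first_difference[OF u v eq x(1) agree]
      contains_patterns_at_first_difference[OF v u eq[symmetric] x(1)] agree
    by (cases, auto)+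
qed

lemma shorter_if_contains_321:
  assumes v: "v permutes {1..N}" and "contains_pattern N v [3, 2, 1]"
  obtains v' where "v' permutes {1..N}" "prefix_max N v' = prefix_max N v" "len N v' < len N v"
proof -
  obtain i j k0 where ijk: "1 \<le> i" "i < j" "j < k0" "k0 \<le> N" "v k0 < v j" "v j < v i"
    using assms(2) unfolding contains_321_iff by blast
  define k where "k = (LEAST k. j < k \<and> v k < v j)"
  have k: "j < k" "v k < v j" "k \<le> k0"
    using LeastI[of "\<lambda>k. j < k \<and> v k < v j" k0] Least_le[of "\<lambda>k. j < k \<and> v k < v j" k0] ijk
    by (auto simp: k_def)
  have gap: "\<not> (v k < v x \<and> v x < v j)" if "j < x" "x < k" for x
    using not_less_Least[of x "\<lambda>k. j < k \<and> v k < v j"] that by (auto simp: k_def)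
  show ?thesis
  proof (rule that)
    show "v \<circ> transpose j k permutes {1..N}"
      using ijk k by (intro permutes_compose[OF permutes_swap_id v]) auto
    show "prefix_max N (v \<circ> transpose j k) = prefix_max N v"
      using ijk k by (intro prefix_max_comp_transpose[of i]) auto
    show "len N (v \<circ> transpose j k) < len N v"
      using len_comp_transpose[OF v, of j k] ijk k gap by fastforce
  qed
qed

lemma longer_if_contains_312:
  assumes v: "v permutes {1..N}" and "contains_pattern N v [3, 1, 2]"
  obtains v' where "v' permutes {1..N}" "prefix_max N v' = prefix_max N v" "len N v < len N v'"
proof -
  obtain i j k0 where ijk: "1 \<le> i" "i < j" "j < k0" "k0 \<le> N" "v j < v k0" "v k0 < v i"
    using assms(2) unfolding contains_312_iff by blast
  define k where "k = (LEAST k. j < k \<and> v j < v k \<and> v k < v i)"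
  have k: "j < k" "v j < v k" "v k < v i" "k \<le> k0"
    using LeastI[of "\<lambda>k. j < k \<and> v j < v k \<and> v k < v i" k0]
      Least_le[of "\<lambda>k. j < k \<and> v j < v k \<and> v k < v i" k0] ijk
    by (auto simp: k_def)
  have gap: "\<not> (v j < v x \<and> v x < v k)" if "j < x" "x < k" for x
    using not_less_Least[of x "\<lambda>k. j < k \<and> v j < v k \<and> v k < v i"] that k by (auto simp: k_def)
  define v' where "v' = v \<circ> transpose j k"
  have v': "v' permutes {1..N}"
    unfolding v'_def using ijk k by (intro permutes_compose[OF permutes_swap_id v]) auto
  have "v' \<circ> transpose j k = v"
    by (simp add: v'_def fun_eq_iff)
  then have "Suc (len N v) = len N v'"
    using len_comp_transpose[OF v', of j k] ijk k gap by (auto simp: v'_def)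
  moreover have "prefix_max N v' = prefix_max N v"
    unfolding v'_def using ijk k by (intro prefix_max_comp_transpose[of i]) auto
  ultimately show ?thesis
    using that v' by simp
qed

lemma unique_good_element_minimizes:
  fixes f :: "'a \<Rightarrow> 'b::linorder"
  assumes "finite S" "S \<noteq> {}"
    and improve: "\<And>v. v \<in> S \<Longrightarrow> \<not> P v \<Longrightarrow> \<exists>v'\<in>S. f v' < f v"
    and unique: "\<And>u v. u \<in> S \<Longrightarrow> v \<in> S \<Longrightarrow> P u \<Longrightarrow> P v \<Longrightarrow> u = v"
  shows "(\<exists>!u. u \<in> S \<and> P u) \<and> (\<forall>u\<in>S. P u \<longrightarrow> (\<forall>v\<in>S. f u \<le> f v))"
proof -
  define u0 where "u0 = arg_min_on f S"
  have u0: "u0 \<in> S" "\<And>v. v \<in> S \<Longrightarrow> f u0 \<le> f v"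
    using arg_min_if_finite[OF assms(1,2), of f] unfolding u0_def by (auto simp: not_less)
  then have "P u0"
    using improve[of u0] by (meson not_le)
  then show ?thesis
    using u0 unique by blast
qed

lemma prefix_max_fiber_avoids_321:
  assumes "w permutes {1..N}"
  shows "(\<exists>!u. u \<in> prefix_max_fiber N w \<and> avoids N u [3,2,1])
    \<and> (\<forall>u\<in>prefix_max_fiber N w. avoids N u [3,2,1] \<longrightarrow>
          (\<forall>v\<in>prefix_max_fiber N w. len N u \<le> len N v))"
proof (rule unique_good_element_minimizes[OF finite_prefix_max_fiber])
  show "prefix_max_fiber N w \<noteq> {}"
    using assms by (auto simp: prefix_max_fiber_def)
  show "\<exists>v'\<in>prefix_max_fiber N w. len N v' < len N v"
    if "v \<in> prefix_max_fiber N w" "\<not> avoids N v [3, 2, 1]" for v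
    using that shorter_if_contains_321[of v N] by (auto simp: prefix_max_fiber_def avoids_def)
  show "u = v" if "u \<in> prefix_max_fiber N w" "v \<in> prefix_max_fiber N w"
    "avoids N u [3, 2, 1]" "avoids N v [3, 2, 1]" for u v
    using that contains_patterns_if_prefix_max_eq(1)[of u N v]
    by (auto simp: prefix_max_fiber_def avoids_def)
qed

lemma prefix_max_fiber_avoids_312:
  assumes "w permutes {1..N}"
  shows "(\<exists>!u. u \<in> prefix_max_fiber N w \<and> avoids N u [3,1,2])
    \<and> (\<forall>u\<in>prefix_max_fiber N w. avoids N u [3,1,2] \<longrightarrow>
          (\<forall>v\<in>prefix_max_fiber N w. len N v \<le> len N u))"
proof -
  have "(\<exists>!u. u \<in> prefix_max_fiber N w \<and> avoids N u [3,1,2])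
    \<and> (\<forall>u\<in>prefix_max_fiber N w. avoids N u [3,1,2] \<longrightarrow>
          (\<forall>v\<in>prefix_max_fiber N w. - int (len N u) \<le> - int (len N v)))"
  proof (rule unique_good_element_minimizes[OF finite_prefix_max_fiber])
    show "prefix_max_fiber N w \<noteq> {}"
      using assms by (auto simp: prefix_max_fiber_def)
    show "\<exists>v'\<in>prefix_max_fiber N w. - int (len N v') < - int (len N v)"
      if "v \<in> prefix_max_fiber N w" "\<not> avoids N v [3, 1, 2]" for v
      using that longer_if_contains_312[of v N] by (auto simp: prefix_max_fiber_def avoids_def)
    show "u = v" if "u \<in> prefix_max_fiber N w" "v \<in> prefix_max_fiber N w"
      "avoids N u [3, 1, 2]" "avoids N v [3, 1, 2]" for u v
      using that contains_patterns_if_prefix_max_eq(2)[of u N v]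
      by (auto simp: prefix_max_fiber_def avoids_def)
  qed
  then show ?thesis
    by simp
qed

theorem mainTheorem2:
  fixes N :: nat and m :: "nat list set"
  assumes "N \<ge> 1" and "G N m \<noteq> {}"
  shows "(\<exists>!u. u \<in> G N m \<and> avoids N u [3,2,1])
       \<and> (\<forall>u \<in> G N m. avoids N u [3,2,1] \<longrightarrow> (\<forall>v \<in> G N m. len N u \<le> len N v))
       \<and> (\<exists>!u. u \<in> G N m \<and> avoids N u [3,1,2])
       \<and> (\<forall>u \<in> G N m. avoids N u [3,1,2] \<longrightarrow> (\<forall>v \<in> G N m. len N v \<le> len N u))"
proof -
  obtain w where w: "w \<in> G N m"
    using assms(2) by blast
  then have "w permutes {1..N}"
    by (simp add: G_def)
  then show ?thesis
    using prefix_max_fiber_avoids_321 prefix_max_fiber_avoids_312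
    unfolding G_eq_prefix_max_fiber[OF w] by blast
qed

end
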